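(* Let $S,T$ be $\mathbb{G}$-stopping times and let $T'=T_{\{S\le T<\infty\}}$. Suppose that $[S,T)\in\mathcal{L}^o$, that $[T']\in\mathcal{L}^o$, and that the process $\mathbf{1}_{[T']}$ satisfies the optional splitting formula on $[S,T]$. Then $[S,T]\in\mathcal{L}^o$.
   Context: Let $(\Omega,\mathcal{A},\mathbb{Q})$ be a probability space with a right-continuous filtration $\mathbb{F}=(\mathcal{F}_t)_{t\ge0}$ such that $\mathcal{F}_0$ contains $\mathcal{N}^{\mathcal{F}_\infty}$, where for a $\sigma$-algebra $\mathcal{T}\subset\mathcal{A}$, $\mathcal{N}^{\mathcal{T}}$ denotes the $\sigma$-algebra generated by all subsets of $\mathcal{T}$-measurable $\mathbb{Q}$-null sets. Let $\tau$ be a random variable with values in $[0,\infty]$, let $\mathcal{N}=\mathcal{N}^{\sigma(\tau)\vee\mathcal{F}_\infty}$, and let $\mathbb{G}=(\mathcal{G}_t)_{t\ge0}$ with $\mathcal{G}_t=\mathcal{N}\vee\bigcap_{s>t}(\mathcal{F}_s\vee\sigma(\tau\wedge s))$. Identities are understood up to $\mathcal{N}$-measurable $\mathbb{Q}$-null sets. For a function $Y''$ on $[0,\infty]\times(\mathbb{R}_+\times\Omega)$, $Y''(\tau)$ denotes $(t,\omega)\mapsto Y''(\tau(\omega),t,\omega)$. A $\mathbb{G}$-optional process $Y$ satisfies the optional splitting formula on a $\mathbb{G}$-optional set $A$ if there exist $Y'\in\mathcal{O}(\mathbb{F})$ and a $\mathcal{B}[0,\infty]\otimes\mathcal{O}(\mathbb{F})$-measurable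 $Y''$ with $Y\mathbf{1}_A=(Y'\mathbf{1}_{[0,\tau)}+Y''(\tau)\mathbf{1}_{[\tau,\infty)})\mathbf{1}_A$; $\mathcal{L}^o$ is the family of $\mathbb{G}$-optional sets on which every $\mathbb{G}$-optional process satisfies it. For a $\mathbb{G}$-stopping time $T$ and $A\in\mathcal{G}_T$, $T_A=T$ on $A$ and $T_A=\infty$ on $A^c$; $[R]$ denotes the graph $\{(t,\omega)\in\mathbb{R}_+\times\Omega:t=R(\omega)\}$. *)

theory Defs
  imports "HOL-Probability.Probability"
begin

text \<open>Setting: \<Omega> = space Q, \<A> = sets Q. Time index \<real>_+ (reals t \<ge> 0);
  random times take values in [0,\<infinity>] = ennreal. A filtration is a map
  real \<Rightarrow> 'a set set (only t \<ge> 0 matters). Processes are maps real \<Rightarrow> 'a \<Rightarrow> real,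
  only their values on \<real>_+ \<times> \<Omega> matter.\<close>

definition join :: "'a set \<Rightarrow> 'a set set \<Rightarrow> 'a set set \<Rightarrow> 'a set set" where
  "join \<Omega> A B = sigma_sets \<Omega> (A \<union> B)"

definition null_gen :: "'a measure \<Rightarrow> 'a set set \<Rightarrow> 'a set set" where
  "null_gen Q T = sigma_sets (space Q)
      {B. \<exists>N\<in>T. N \<in> sets Q \<and> emeasure Q N = 0 \<and> B \<subseteq> N}"

definition F_inf :: "'a measure \<Rightarrow> (real \<Rightarrow> 'a set set) \<Rightarrow> 'a set set" where
  "F_inf Q F = sigma_sets (space Q) (\<Union>t\<in>{0..}. F t)"

definition sig_of :: "'a measure \<Rightarrow> ('a \<Rightarrow> ennreal) \<Rightarrow> 'a set set" where
  "sig_of Q f = {f -` B \<inter> space Q | B. B \<in> sets (borel :: ennreal measure)}"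

definition tauF :: "'a measure \<Rightarrow> (real \<Rightarrow> 'a set set) \<Rightarrow> ('a \<Rightarrow> ennreal) \<Rightarrow> 'a set set" where
  "tauF Q F \<tau> = join (space Q) (sig_of Q \<tau>) (F_inf Q F)"

definition calN :: "'a measure \<Rightarrow> (real \<Rightarrow> 'a set set) \<Rightarrow> ('a \<Rightarrow> ennreal) \<Rightarrow> 'a set set" where
  "calN Q F \<tau> = null_gen Q (tauF Q F \<tau>)"

definition Gfilt :: "'a measure \<Rightarrow> (real \<Rightarrow> 'a set set) \<Rightarrow> ('a \<Rightarrow> ennreal) \<Rightarrow> real \<Rightarrow> 'a set set" where
  "Gfilt Q F \<tau> t = join (space Q) (calN Q F \<tau>)
      (\<Inter>s\<in>{t<..}. join (space Q) (F s) (sig_of Q (\<lambda>\<omega>. min (\<tau> \<omega>) (ennreal s))))"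

text \<open>A set B \<subseteq> \<Omega> is an \<N>-measurable Q-null set iff it is contained in a Q-null
  set from sigma(tau) \<or> F_infinity; identities up to such sets are expressed by this.\<close>
definition negligible :: "'a measure \<Rightarrow> (real \<Rightarrow> 'a set set) \<Rightarrow> ('a \<Rightarrow> ennreal) \<Rightarrow> 'a set \<Rightarrow> bool" where
  "negligible Q F \<tau> B \<longleftrightarrow> (\<exists>N\<in>tauF Q F \<tau>. emeasure Q N = 0 \<and> B \<subseteq> N)"

definition filtration_on :: "'a measure \<Rightarrow> (real \<Rightarrow> 'a set set) \<Rightarrow> bool" where
  "filtration_on Q F \<longleftrightarrow>
     (\<forall>t\<ge>0. sigma_algebra (space Q) (F t) \<and> F t \<subseteq> sets Q) \<and>
     (\<forall>s t. 0 \<le> s \<longrightarrow> s \<le> t \<longrightarrow> F s \<subseteq> F t)"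

definition right_continuous_filt :: "(real \<Rightarrow> 'a set set) \<Rightarrow> bool" where
  "right_continuous_filt F \<longleftrightarrow> (\<forall>t\<ge>0. F t = (\<Inter>s\<in>{t<..}. F s))"

definition E :: "'a set \<Rightarrow> (real \<times> 'a) set" where
  "E \<Omega> = {t. 0 \<le> t} \<times> \<Omega>"

definition adapted :: "'a set \<Rightarrow> (real \<Rightarrow> 'a set set) \<Rightarrow> (real \<Rightarrow> 'a \<Rightarrow> real) \<Rightarrow> bool" where
  "adapted \<Omega> H X \<longleftrightarrow>
     (\<forall>t\<ge>0. \<forall>B\<in>sets (borel :: real measure). {\<omega>\<in>\<Omega>. X t \<omega> \<in> B} \<in> H t)"

definition cadlag :: "'a set \<Rightarrow> (real \<Rightarrow> 'a \<Rightarrow> real) \<Rightarrow> bool" where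
  "cadlag \<Omega> X \<longleftrightarrow> (\<forall>\<omega>\<in>\<Omega>. \<forall>t\<ge>0.
      continuous (at_right t) (\<lambda>s. X s \<omega>) \<and>
      (0 < t \<longrightarrow> (\<exists>l. ((\<lambda>s. X s \<omega>) \<longlongrightarrow> l) (at_left t))))"

definition optional :: "'a set \<Rightarrow> (real \<Rightarrow> 'a set set) \<Rightarrow> (real \<times> 'a) set set" where
  "optional \<Omega> H = sigma_sets (E \<Omega>)
     {{(t,\<omega>)\<in>E \<Omega>. X t \<omega> \<in> B} | X B.
        adapted \<Omega> H X \<and> cadlag \<Omega> X \<and> B \<in> sets (borel :: real measure)}"

definition optional_process :: "'a set \<Rightarrow> (real \<Rightarrow> 'a set set) \<Rightarrow> (real \<Rightarrow> 'a \<Rightarrow> real) \<Rightarrow> bool" where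
  "optional_process \<Omega> H Y \<longleftrightarrow>
     (\<forall>B\<in>sets (borel :: real measure). {(t,\<omega>)\<in>E \<Omega>. Y t \<omega> \<in> B} \<in> optional \<Omega> H)"

definition BO_measurable :: "'a set \<Rightarrow> (real \<Rightarrow> 'a set set) \<Rightarrow> (ennreal \<Rightarrow> real \<Rightarrow> 'a \<Rightarrow> real) \<Rightarrow> bool" where
  "BO_measurable \<Omega> F Y'' \<longleftrightarrow>
     (\<forall>B\<in>sets (borel :: real measure).
        {(u,t,\<omega>). (t,\<omega>) \<in> E \<Omega> \<and> Y'' u t \<omega> \<in> B} \<in>
        sigma_sets (UNIV \<times> E \<Omega>)
          {U \<times> C | U C. U \<in> sets (borel :: ennreal measure) \<and> C \<in> optional \<Omega> F})"

definition splitting :: "'a measure \<Rightarrow> (real \<Rightarrow> 'a set set) \<Rightarrow> ('a \<Rightarrow> ennreal)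
    \<Rightarrow> (real \<Rightarrow> 'a \<Rightarrow> real) \<Rightarrow> (real \<times> 'a) set \<Rightarrow> bool" where
  "splitting Q F \<tau> Y A \<longleftrightarrow> (\<exists>Y' Y''.
     optional_process (space Q) F Y' \<and> BO_measurable (space Q) F Y'' \<and>
     negligible Q F \<tau> {\<omega>\<in>space Q. \<exists>t\<ge>0. (t,\<omega>) \<in> A \<and>
        Y t \<omega> \<noteq> (if ennreal t < \<tau> \<omega> then Y' t \<omega> else Y'' (\<tau> \<omega>) t \<omega>)})"

definition Lo :: "'a measure \<Rightarrow> (real \<Rightarrow> 'a set set) \<Rightarrow> ('a \<Rightarrow> ennreal) \<Rightarrow> (real \<times> 'a) set set" where
  "Lo Q F \<tau> = {A. A \<in> optional (space Q) (Gfilt Q F \<tau>) \<and>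
      (\<forall>Y. optional_process (space Q) (Gfilt Q F \<tau>) Y \<longrightarrow> splitting Q F \<tau> Y A)}"

definition stopping_time_on :: "'a set \<Rightarrow> (real \<Rightarrow> 'a set set) \<Rightarrow> ('a \<Rightarrow> ennreal) \<Rightarrow> bool" where
  "stopping_time_on \<Omega> H T \<longleftrightarrow> (\<forall>t\<ge>0. {\<omega>\<in>\<Omega>. T \<omega> \<le> ennreal t} \<in> H t)"

definition sint_co :: "'a set \<Rightarrow> ('a \<Rightarrow> ennreal) \<Rightarrow> ('a \<Rightarrow> ennreal) \<Rightarrow> (real \<times> 'a) set" where
  "sint_co \<Omega> S T = {(t,\<omega>)\<in>E \<Omega>. S \<omega> \<le> ennreal t \<and> ennreal t < T \<omega>}"

definition sint_cc :: "'a set \<Rightarrow> ('a \<Rightarrow> ennreal) \<Rightarrow> ('a \<Rightarrow> ennreal) \<Rightarrow> (real \<times> 'a) set" where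
  "sint_cc \<Omega> S T = {(t,\<omega>)\<in>E \<Omega>. S \<omega> \<le> ennreal t \<and> ennreal t \<le> T \<omega>}"

definition graph :: "'a set \<Rightarrow> ('a \<Rightarrow> ennreal) \<Rightarrow> (real \<times> 'a) set" where
  "graph \<Omega> R = {(t,\<omega>)\<in>E \<Omega>. ennreal t = R \<omega>}"

definition restrict_time :: "('a \<Rightarrow> ennreal) \<Rightarrow> 'a set \<Rightarrow> 'a \<Rightarrow> ennreal" where
  "restrict_time T A \<omega> = (if \<omega> \<in> A then T \<omega> else \<infinity>)"

end

theory Submission
  imports Defs
begin

(* The closed interval [S,T] is the union of [S,T) and the graph
   of T' = T_{S <= T < oo}.  We prove a general gluing principle: if A and B
   belong to L^o and the indicator 1_B satisfies the optional splitting formula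
   on A \<union> B with pieces Z', Z'', then every G-optional Y splits on A \<union> B.
   Indeed, if Y splits on A with pieces (Y1', Y1'') and on B with (Y2', Y2''),
   then the glued pieces "Y2 where Z \<noteq> 0, else Y1" represent Y on A \<union> B,
   outside the union of the three exceptional null sets.
   The file establishes, in order: measurability of such glued processes for
   the F-optional and the B[0,oo] \<otimes> O(F) sigma-algebras; closure of the
   negligible sets under finite unions; the pointwise gluing inclusion of
   exceptional sets; the gluing principle for L^o; and the decomposition
   [S,T] = [S,T) \<union> [T'].  The theorem is then the gluing principle applied
   to this decomposition. *)

lemma borel_preimages_if:
  fixes z f g :: "'b \<Rightarrow> real"
  assumes M: "sigma_algebra \<Omega> M"
    and z: "\<forall>B\<in>sets borel. {x\<in>\<Omega>. z x \<in> B} \<in> M"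
    and f: "\<forall>B\<in>sets borel. {x\<in>\<Omega>. f x \<in> B} \<in> M"
    and g: "\<forall>B\<in>sets borel. {x\<in>\<Omega>. g x \<in> B} \<in> M"
  shows "\<forall>B\<in>sets borel. {x\<in>\<Omega>. (if z x \<noteq> 0 then f x else g x) \<in> B} \<in> M"
proof
  interpret sigma_algebra \<Omega> M by (fact M)
  fix B :: "real set" assume B: "B \<in> sets borel"
  have nz: "{x\<in>\<Omega>. z x \<noteq> 0} \<in> M"
    using z[rule_format, of "- {0}"] by (simp add: Compl_eq_Diff_UNIV)
  have "{x\<in>\<Omega>. (if z x \<noteq> 0 then f x else g x) \<in> B} =
      ({x\<in>\<Omega>. z x \<noteq> 0} \<inter> {x\<in>\<Omega>. f x \<in> B}) \<union> ((\<Omega> - {x\<in>\<Omega>. z x \<noteq> 0}) \<inter> {x\<in>\<Omega>. g x \<in> B})"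
    by auto
  also have "\<dots> \<in> M"
    using nz f g B by (intro Un Int Diff top) auto
  finally show "{x\<in>\<Omega>. (if z x \<noteq> 0 then f x else g x) \<in> B} \<in> M" .
qed

lemma optional_sigma_algebra: "sigma_algebra (E \<Omega>) (optional \<Omega> H)"
  unfolding optional_def by (rule sigma_algebra_sigma_sets) auto

lemma optional_process_if:
  assumes "optional_process \<Omega> H Z" "optional_process \<Omega> H Y2" "optional_process \<Omega> H Y1"
  shows "optional_process \<Omega> H (\<lambda>t \<omega>. if Z t \<omega> \<noteq> 0 then Y2 t \<omega> else Y1 t \<omega>)"
proof -
  have conv: "\<And>P. {(t,\<omega>)\<in>E \<Omega>. P t \<omega>} = {x\<in>E \<Omega>. P (fst x) (snd x)}" by auto
  show ?thesis
    using borel_preimages_if[OF optional_sigma_algebra, where z="\<lambda>x. Z (fst x) (snd x)"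
        and f="\<lambda>x. Y2 (fst x) (snd x)" and g="\<lambda>x. Y1 (fst x) (snd x)"] assms
    unfolding optional_process_def conv by blast
qed

abbreviation BO_sets :: "'a set \<Rightarrow> (real \<Rightarrow> 'a set set) \<Rightarrow> (ennreal \<times> real \<times> 'a) set set" where
  "BO_sets \<Omega> F \<equiv> sigma_sets (UNIV \<times> E \<Omega>)
     {U \<times> C | U C. U \<in> sets (borel :: ennreal measure) \<and> C \<in> optional \<Omega> F}"

lemma BO_sigma_algebra: "sigma_algebra (UNIV \<times> E \<Omega>) (BO_sets \<Omega> F)"
proof (rule sigma_algebra_sigma_sets)
  interpret sigma_algebra "E \<Omega>" "optional \<Omega> F" by (rule optional_sigma_algebra)
  show "{U \<times> C | U C. U \<in> sets (borel :: ennreal measure) \<and> C \<in> optional \<Omega> F}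
          \<subseteq> Pow (UNIV \<times> E \<Omega>)"
    using sets_into_space by blast
qed

lemma BO_measurable_if:
  assumes "BO_measurable \<Omega> F Z" "BO_measurable \<Omega> F Y2" "BO_measurable \<Omega> F Y1"
  shows "BO_measurable \<Omega> F (\<lambda>u t \<omega>. if Z u t \<omega> \<noteq> 0 then Y2 u t \<omega> else Y1 u t \<omega>)"
proof -
  have conv: "\<And>P. {(u,t,\<omega>). (t,\<omega>) \<in> E \<Omega> \<and> P u t \<omega>} =
      {x\<in>UNIV \<times> E \<Omega>. P (fst x) (fst (snd x)) (snd (snd x))}" by auto
  show ?thesis
    using borel_preimages_if[OF BO_sigma_algebra,
        where z="\<lambda>x. Z (fst x) (fst (snd x)) (snd (snd x))"
          and f="\<lambda>x. Y2 (fst x) (fst (snd x)) (snd (snd x))"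
          and g="\<lambda>x. Y1 (fst x) (fst (snd x)) (snd (snd x))"] assms
    unfolding BO_measurable_def conv by blast
qed

text \<open>sigma(tau) \<or> F_oo consists of events, so its null sets are measured by Q.\<close>
lemma tauF_subset_sets:
  assumes "filtration_on Q F" "\<tau> \<in> borel_measurable Q"
  shows "tauF Q F \<tau> \<subseteq> sets Q"
proof -
  have "sig_of Q \<tau> \<subseteq> sets Q"
    unfolding sig_of_def using assms(2) measurable_sets by blast
  moreover have "F_inf Q F \<subseteq> sets Q"
    using assms(1) unfolding F_inf_def filtration_on_def
    by (intro sets.sigma_sets_subset) auto
  ultimately show ?thesis
    unfolding tauF_def join_def by (intro sets.sigma_sets_subset) auto
qed

lemma negligible_subset: "negligible Q F \<tau> B \<Longrightarrow> A \<subseteq> B \<Longrightarrow> negligible Q F \<tau> A"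
  unfolding negligible_def by blast

lemma negligible_Un:
  assumes "tauF Q F \<tau> \<subseteq> sets Q" "negligible Q F \<tau> A" "negligible Q F \<tau> B"
  shows "negligible Q F \<tau> (A \<union> B)"
proof -
  obtain N1 where N1: "N1 \<in> tauF Q F \<tau>" "emeasure Q N1 = 0" "A \<subseteq> N1"
    using assms(2) unfolding negligible_def by blast
  obtain N2 where N2: "N2 \<in> tauF Q F \<tau>" "emeasure Q N2 = 0" "B \<subseteq> N2"
    using assms(3) unfolding negligible_def by blast
  have "N1 \<union> N2 \<in> tauF Q F \<tau>"
    using N1 N2 unfolding tauF_def join_def by (simp add: sigma_sets_Un)
  moreover have "emeasure Q (N1 \<union> N2) = 0"
    using emeasure_subadditive[of N1 Q N2] N1 N2 assms(1) by auto
  ultimately show ?thesis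
    unfolding negligible_def using N1 N2 by blast
qed

definition split_error :: "'a measure \<Rightarrow> ('a \<Rightarrow> ennreal) \<Rightarrow> (real \<Rightarrow> 'a \<Rightarrow> real)
    \<Rightarrow> (real \<Rightarrow> 'a \<Rightarrow> real) \<Rightarrow> (ennreal \<Rightarrow> real \<Rightarrow> 'a \<Rightarrow> real) \<Rightarrow> (real \<times> 'a) set \<Rightarrow> 'a set" where
  "split_error Q \<tau> Y Y' Y'' A = {\<omega>\<in>space Q. \<exists>t\<ge>0. (t,\<omega>) \<in> A \<and>
      Y t \<omega> \<noteq> (if ennreal t < \<tau> \<omega> then Y' t \<omega> else Y'' (\<tau> \<omega>) t \<omega>)}"

lemma splitting_iff:
  "splitting Q F \<tau> Y A \<longleftrightarrow> (\<exists>Y' Y''. optional_process (space Q) F Y' \<and>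
      BO_measurable (space Q) F Y'' \<and> negligible Q F \<tau> (split_error Q \<tau> Y Y' Y'' A))"
  unfolding splitting_def split_error_def ..

lemma split_error_glue:
  "split_error Q \<tau> Y (\<lambda>t \<omega>. if Z' t \<omega> \<noteq> 0 then Y2' t \<omega> else Y1' t \<omega>)
       (\<lambda>u t \<omega>. if Z'' u t \<omega> \<noteq> 0 then Y2'' u t \<omega> else Y1'' u t \<omega>) (A \<union> B)
   \<subseteq> split_error Q \<tau> Y Y1' Y1'' A \<union> split_error Q \<tau> Y Y2' Y2'' B
     \<union> split_error Q \<tau> (\<lambda>t \<omega>. indicator B (t, \<omega>)) Z' Z'' (A \<union> B)"
proof
  fix \<omega>
  assume "\<omega> \<in> split_error Q \<tau> Y (\<lambda>t \<omega>. if Z' t \<omega> \<noteq> 0 then Y2' t \<omega> else Y1' t \<omega>)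
       (\<lambda>u t \<omega>. if Z'' u t \<omega> \<noteq> 0 then Y2'' u t \<omega> else Y1'' u t \<omega>) (A \<union> B)"
  then obtain t where t: "\<omega> \<in> space Q" "t \<ge> 0" "(t,\<omega>) \<in> A \<union> B"
    and wrong: "Y t \<omega> \<noteq> (if ennreal t < \<tau> \<omega>
        then (if Z' t \<omega> \<noteq> 0 then Y2' t \<omega> else Y1' t \<omega>)
        else (if Z'' (\<tau> \<omega>) t \<omega> \<noteq> 0 then Y2'' (\<tau> \<omega>) t \<omega> else Y1'' (\<tau> \<omega>) t \<omega>))"
    unfolding split_error_def by blast
  show "\<omega> \<in> split_error Q \<tau> Y Y1' Y1'' A \<union> split_error Q \<tau> Y Y2' Y2'' B
     \<union> split_error Q \<tau> (\<lambda>t \<omega>. indicator B (t, \<omega>)) Z' Z'' (A \<union> B)"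
  proof (rule ccontr)
    assume "\<not> ?thesis"
    then have on_A: "(t,\<omega>) \<in> A \<Longrightarrow>
          Y t \<omega> = (if ennreal t < \<tau> \<omega> then Y1' t \<omega> else Y1'' (\<tau> \<omega>) t \<omega>)"
      and on_B: "(t,\<omega>) \<in> B \<Longrightarrow>
          Y t \<omega> = (if ennreal t < \<tau> \<omega> then Y2' t \<omega> else Y2'' (\<tau> \<omega>) t \<omega>)"
      and indicator_B: "indicator B (t, \<omega>) =
          (if ennreal t < \<tau> \<omega> then Z' t \<omega> else Z'' (\<tau> \<omega>) t \<omega>)"
      using t unfolding split_error_def by blast+
    show False
    proof (cases "(t,\<omega>) \<in> B")
      case True
      then show False using on_B indicator_B wrong by (auto split: if_splits)
    next
      case False
      then show False using on_A t(3) indicator_B wrong by (auto split: if_splits)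
    qed
  qed
qed

lemma Lo_Un_glue:
  assumes tauF: "tauF Q F \<tau> \<subseteq> sets Q"
    and A: "A \<in> Lo Q F \<tau>" and B: "B \<in> Lo Q F \<tau>"
    and split_B: "splitting Q F \<tau> (\<lambda>t \<omega>. indicator B (t, \<omega>)) (A \<union> B)"
  shows "A \<union> B \<in> Lo Q F \<tau>"
  unfolding Lo_def
proof (intro CollectI conjI allI impI)
  show "A \<union> B \<in> optional (space Q) (Gfilt Q F \<tau>)"
    using A B unfolding Lo_def optional_def by (auto intro: sigma_sets_Un)
  fix Y assume Y: "optional_process (space Q) (Gfilt Q F \<tau>) Y"
  obtain Y1' Y1'' where Y1: "optional_process (space Q) F Y1'" "BO_measurable (space Q) F Y1''"
      "negligible Q F \<tau> (split_error Q \<tau> Y Y1' Y1'' A)"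
    using A Y unfolding Lo_def splitting_iff by blast
  obtain Y2' Y2'' where Y2: "optional_process (space Q) F Y2'" "BO_measurable (space Q) F Y2''"
      "negligible Q F \<tau> (split_error Q \<tau> Y Y2' Y2'' B)"
    using B Y unfolding Lo_def splitting_iff by blast
  obtain Z' Z'' where Z: "optional_process (space Q) F Z'" "BO_measurable (space Q) F Z''"
      "negligible Q F \<tau> (split_error Q \<tau> (\<lambda>t \<omega>. indicator B (t, \<omega>)) Z' Z'' (A \<union> B))"
    using split_B unfolding splitting_iff by blast
  have "negligible Q F \<tau> (split_error Q \<tau> Y Y1' Y1'' A \<union> split_error Q \<tau> Y Y2' Y2'' B
      \<union> split_error Q \<tau> (\<lambda>t \<omega>. indicator B (t, \<omega>)) Z' Z'' (A \<union> B))"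
    by (intro negligible_Un[OF tauF] Y1(3) Y2(3) Z(3))
  then have "negligible Q F \<tau> (split_error Q \<tau> Y
      (\<lambda>t \<omega>. if Z' t \<omega> \<noteq> 0 then Y2' t \<omega> else Y1' t \<omega>)
      (\<lambda>u t \<omega>. if Z'' u t \<omega> \<noteq> 0 then Y2'' u t \<omega> else Y1'' u t \<omega>) (A \<union> B))"
    using split_error_glue by (rule negligible_subset)
  then show "splitting Q F \<tau> Y (A \<union> B)"
    unfolding splitting_iff
    using optional_process_if[OF Z(1) Y2(1) Y1(1)] BO_measurable_if[OF Z(2) Y2(2) Y1(2)]
    by blast
qed

text \<open>[S,T] = [S,T) \<union> [T_{S \<le> T < \<infinity>}]: the right endpoint is added exactly where
  it is finite and not before S.\<close>
lemma sint_cc_eq_Un_graph: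
  "sint_cc \<Omega> S T =
     sint_co \<Omega> S T \<union> graph \<Omega> (restrict_time T {\<omega>\<in>\<Omega>. S \<omega> \<le> T \<omega> \<and> T \<omega> < \<infinity>})"
  unfolding sint_cc_def sint_co_def graph_def restrict_time_def E_def
  by (auto simp: order.order_iff_strict split: if_splits) (metis ennreal_less_top)+

theorem mainTheorem8:
  fixes Q :: "'a measure" and F :: "real \<Rightarrow> 'a set set" and \<tau> S T :: "'a \<Rightarrow> ennreal"
  assumes "prob_space Q"
    and "filtration_on Q F"
    and "right_continuous_filt F"
    and "null_gen Q (F_inf Q F) \<subseteq> F 0"
    and "\<tau> \<in> borel_measurable Q"
    and "stopping_time_on (space Q) (Gfilt Q F \<tau>) S"
    and "stopping_time_on (space Q) (Gfilt Q F \<tau>) T"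
    and "sint_co (space Q) S T \<in> Lo Q F \<tau>"
    and "graph (space Q) (restrict_time T {\<omega>\<in>space Q. S \<omega> \<le> T \<omega> \<and> T \<omega> < \<infinity>}) \<in> Lo Q F \<tau>"
    and "splitting Q F \<tau>
           (\<lambda>t \<omega>. indicator (graph (space Q) (restrict_time T {\<omega>\<in>space Q. S \<omega> \<le> T \<omega> \<and> T \<omega> < \<infinity>})) (t, \<omega>))
           (sint_cc (space Q) S T)"
  shows "sint_cc (space Q) S T \<in> Lo Q F \<tau>"
  using Lo_Un_glue[OF tauF_subset_sets[OF assms(2,5)] assms(8,9)] assms(10)
  unfolding sint_cc_eq_Un_graph by blast

end
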